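(* Let $\{C_i\}$ be the square cells of a Cartesian grid, each of side length $\Delta x>0$, and let $\Delta t>0$ be a global time step. Suppose the cell averages of the water height at time $t^n$ satisfy $h_i^n\ge 0$ for all $i$. For every edge $E$ let a real number (numerical mass flux) be given, conservatively: if $E$ separates cells $C_i$ and $C_j$, denote by $\mathcal H_{E,i}$ the flux across $E$ measured with respect to the outward normal of $C_i$, so that $\mathcal H_{E,j}=-\mathcal H_{E,i}$. Define $\mathcal H^+_{E,i}:=\max\{\mathcal H_{E,i},0\}$, the draining time $$\Delta t_{C_i,\mathrm{drain}}:=\frac{\Delta x\,h_i^n}{\sum_{E\subset\partial C_i}\mathcal H^+_{E,i}}\qquad(\text{set to }+\infty\text{ if the denominator is }0),$$ and, for each edge $E$ with $\mathcal H_{E,i}>0$ for one of its two adjacent cells $C_i$ (the upwind cell $C^-(E):=C_i$), the edge time step $\Delta t_E:=\min\{\Delta t,\Delta t_{C^-(E),\mathrm{drain}}\}$; for edges with zero flux put $\Delta t_E:=\Delta t$. Then the water heights produced by the modified finite volume update $$h_i^{n+1}=h_i^n-\frac{1}{\Delta x}\sum_{E\subset\partial C_i}\Delta t_E\,\mathcal H_{E,i}$$ satisfy $h_i^{n+1}\ge 0$ for every cell $C_i$.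
   Context: This is the first (water-height) component of a conservative finite volume scheme for the shallow water equations $h_t+\nabla\cdot(h\vec v)=0$, $(h\vec v)_t+\nabla\cdot(h\vec v\otimes\vec v+\tfrac g2h^2I)=-gh\nabla b$, written in the form $\mathbf u_i^{n+1}=\mathbf u_i^n-\frac{\Delta t}{\Delta x}\big(\sum_{E\subset\partial C_i}\mathcal F_E+\mathcal S_i\big)$, where $\mathcal F_E$ is an arbitrary numerical edge flux (averaged over the edge length and time step) and the first component of $\mathcal S_i$ is zero; $\mathcal H_{E,i}$ is the first component of $\mathcal F_E$ oriented outward from $C_i$. The modification replaces, edge by edge, the global time step $\Delta t$ multiplying the flux by the cut-off step $\Delta t_E$ (equivalently, the outgoing flux of a cell is set to zero after its draining time), while the solution is still advanced by the global step $\Delta t$. *)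

theory Defs
  imports Main "HOL-Library.Extended_Real"
begin

text \<open>Cartesian grid: cells are indexed by integer pairs (i,j).
  Edges: VE i j is the vertical edge between cells (i,j) and (i+1,j);
  HE i j is the horizontal edge between cells (i,j) and (i,j+1).\<close>

type_synonym cell = "int \<times> int"

datatype edge = VE int int | HE int int

fun low_cell :: "edge \<Rightarrow> cell" where
  "low_cell (VE i j) = (i, j)"
| "low_cell (HE i j) = (i, j)"

fun up_cell :: "edge \<Rightarrow> cell" where
  "up_cell (VE i j) = (i + 1, j)"
| "up_cell (HE i j) = (i, j + 1)"

fun cell_edges :: "cell \<Rightarrow> edge set" where
  "cell_edges (i, j) = {VE i j, VE (i - 1) j, HE i j, HE i (j - 1)}"

text \<open>A numerical mass flux is one real number F E per edge, measured w.r.t. the normal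
  pointing from low_cell E to up_cell E.  The flux of edge E oriented outward from cell c
  (\<open>H_{E,c}\<close>); conservation \<open>H_{E,j} = - H_{E,i}\<close> holds by construction.\<close>
definition Hout :: "(edge \<Rightarrow> real) \<Rightarrow> edge \<Rightarrow> cell \<Rightarrow> real" where
  "Hout F E c = (if c = low_cell E then F E else if c = up_cell E then - F E else 0)"

definition drain_time :: "real \<Rightarrow> (cell \<Rightarrow> real) \<Rightarrow> (edge \<Rightarrow> real) \<Rightarrow> cell \<Rightarrow> ereal" where
  "drain_time dx h F c =
     (let D = (\<Sum>E\<in>cell_edges c. max (Hout F E c) 0)
      in if D = 0 then \<infinity> else ereal (dx * h c / D))"

definition edge_dt :: "real \<Rightarrow> real \<Rightarrow> (cell \<Rightarrow> real) \<Rightarrow> (edge \<Rightarrow> real) \<Rightarrow> edge \<Rightarrow> real" where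
  "edge_dt dx dt h F E =
     (if Hout F E (low_cell E) > 0 then real_of_ereal (min (ereal dt) (drain_time dx h F (low_cell E)))
      else if Hout F E (up_cell E) > 0 then real_of_ereal (min (ereal dt) (drain_time dx h F (up_cell E)))
      else dt)"

definition h_new :: "real \<Rightarrow> real \<Rightarrow> (cell \<Rightarrow> real) \<Rightarrow> (edge \<Rightarrow> real) \<Rightarrow> cell \<Rightarrow> real" where
  "h_new dx dt h F c = h c - (1 / dx) * (\<Sum>E\<in>cell_edges c. edge_dt dx dt h F E * Hout F E c)"

end

theory Submission
  imports Defs
begin

text \<open>Every edge along which mass leaves a cell c is advanced with the same step,
  \<open>T_c = min \<Delta>t \<Delta>t_drain(c)\<close>, because c is its upwind cell. Hence the mass leaving c is at most
  \<open>T_c\<close> times the total outflow, which by the choice of the draining time is at most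
  \<open>\<Delta>x h_c\<close>; the incoming edges, having nonnegative steps, only add mass.\<close>

definition outflow :: "(edge \<Rightarrow> real) \<Rightarrow> cell \<Rightarrow> real" where
  "outflow F c = (\<Sum>E\<in>cell_edges c. max (Hout F E c) 0)"

definition cell_dt :: "real \<Rightarrow> real \<Rightarrow> (cell \<Rightarrow> real) \<Rightarrow> (edge \<Rightarrow> real) \<Rightarrow> cell \<Rightarrow> real" where
  "cell_dt dx dt h F c = real_of_ereal (min (ereal dt) (drain_time dx h F c))"

lemma outflow_nonneg: "outflow F c \<ge> 0"
  unfolding outflow_def by (rule sum_nonneg) simp

lemma low_cell_ne_up_cell: "low_cell E \<noteq> up_cell E"
  by (cases E) auto

lemma cell_dt_nonneg:
  assumes "dx \<ge> 0" "dt \<ge> 0" "h c \<ge> 0"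
  shows "cell_dt dx dt h F c \<ge> 0"
  using assms outflow_nonneg[of F c]
  by (auto simp: cell_dt_def drain_time_def outflow_def[symmetric] Let_def min_def)

lemma cell_dt_mult_outflow_le:
  assumes "dx \<ge> 0" "dt \<ge> 0" "h c \<ge> 0"
  shows "cell_dt dx dt h F c * outflow F c \<le> dx * h c"
proof (cases "outflow F c = 0")
  case True
  then show ?thesis using assms by simp
next
  case False
  then have D: "outflow F c > 0" using outflow_nonneg[of F c] by simp
  have "cell_dt dx dt h F c \<le> dx * h c / outflow F c"
    using False
    by (simp add: cell_dt_def drain_time_def outflow_def[symmetric] Let_def min_def)
  then show ?thesis using D by (simp add: pos_le_divide_eq)
qed

lemma edge_dt_outgoing:
  assumes "Hout F E c > 0"
  shows "edge_dt dx dt h F E = cell_dt dx dt h F c"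
proof (cases "c = low_cell E")
  case True
  then show ?thesis using assms by (simp add: edge_dt_def cell_dt_def)
next
  case False
  with assms have "c = up_cell E" "F E < 0"
    by (auto simp: Hout_def split: if_splits)
  then show ?thesis
    using assms low_cell_ne_up_cell[of E] by (simp add: edge_dt_def cell_dt_def Hout_def)
qed

lemma edge_dt_nonneg:
  assumes "dx \<ge> 0" "dt \<ge> 0" "\<forall>c. h c \<ge> 0"
  shows "edge_dt dx dt h F E \<ge> 0"
  using assms(2) cell_dt_nonneg[OF assms(1,2) assms(3)[rule_format]]
  by (simp add: edge_dt_def cell_dt_def[symmetric])

lemma flux_term_le:
  assumes "dx \<ge> 0" "dt \<ge> 0" "\<forall>c. h c \<ge> 0"
  shows "edge_dt dx dt h F E * Hout F E c \<le> cell_dt dx dt h F c * max (Hout F E c) 0"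
proof (cases "Hout F E c > 0")
  case True
  then show ?thesis by (simp add: edge_dt_outgoing)
next
  case False
  then have "edge_dt dx dt h F E * Hout F E c \<le> 0"
    using edge_dt_nonneg[OF assms] by (simp add: mult_nonneg_nonpos)
  then show ?thesis using False by simp
qed

lemma mass_leaving_cell_le:
  assumes "dx \<ge> 0" "dt \<ge> 0" "\<forall>c. h c \<ge> 0"
  shows "(\<Sum>E\<in>cell_edges c. edge_dt dx dt h F E * Hout F E c) \<le> dx * h c"
proof -
  have "(\<Sum>E\<in>cell_edges c. edge_dt dx dt h F E * Hout F E c)
      \<le> (\<Sum>E\<in>cell_edges c. cell_dt dx dt h F c * max (Hout F E c) 0)"
    by (rule sum_mono) (rule flux_term_le[OF assms])
  also have "\<dots> = cell_dt dx dt h F c * outflow F c"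
    by (simp add: outflow_def sum_distrib_left)
  also have "\<dots> \<le> dx * h c"
    using assms by (intro cell_dt_mult_outflow_le) blast+
  finally show ?thesis .
qed

theorem mainTheorem1:
  fixes dx dt :: real and h :: "cell \<Rightarrow> real" and F :: "edge \<Rightarrow> real"
  assumes "dx > 0" and "dt > 0" and "\<forall>c. h c \<ge> 0"
  shows "\<forall>c. h_new dx dt h F c \<ge> 0"
proof
  fix c
  have "(\<Sum>E\<in>cell_edges c. edge_dt dx dt h F E * Hout F E c) \<le> dx * h c"
    using assms by (intro mass_leaving_cell_le) auto
  then have "(1 / dx) * (\<Sum>E\<in>cell_edges c. edge_dt dx dt h F E * Hout F E c) \<le> h c"
    using \<open>dx > 0\<close> by (simp add: divide_le_eq mult.commute)
  then show "h_new dx dt h F c \<ge> 0"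
    unfolding h_new_def by linarith
qed

end
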